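(* Let $T$ be an $X$-tree and suppose $x_1,\dots,x_6$ are six distinct elements of $X$ such that $x_1x_4$, $x_2x_5$, $x_3x_6$ are all $T$-cherries. Then $\mathcal{L}_1=\{x_1x_2,x_2x_3,x_3x_4,x_4x_5,x_5x_6,x_6x_1\}$ and $\mathcal{L}_2=\{x_1x_3,x_3x_4,x_4x_6,x_6x_1\}$ are circuits of $\mathbb{M}(T)$ while their symmetric difference $\{x_1x_2,x_2x_3,x_3x_1,x_4x_5,x_5x_6,x_6x_4\}$ is independent in $\mathbb{M}(T)$; consequently $\mathbb{M}(T)$ is not a binary matroid. In particular, if $T$ is a binary $X$-tree such that $\mathbb{M}(T)$ is a binary matroid, then $T$ is a caterpillar tree.
   Context: Let $X$ be a finite set with $|X|=n\ge 3$. An $X$-tree is a finite tree $T=(V,E)$ whose set of degree-1 vertices is exactly $X$ and which has no vertices of degree $2$; it is binary if all interior vertices have degree $3$, and a binary $X$-tree is a caterpillar tree if all its interior vertices lie on a single path of $T$. A cord is a $2$-subset $xy$ of $X$. For each cord $xy$, $\lambda^T_{xy}:\mathbb{R}^E\to\mathbb{R}$, $\omega\mapsto\sum_{e\in E(x|y)}\omega(e)$ where $E(x|y)$ is the edge set of the path from $x$ to $y$. $\mathbb{M}(T)$ is the matroid on $\binom{X}{2}$ represented over $\mathbb{R}$ by $xy\mapsto\lambda^T_{xy}$; circuits are minimal dependent sets. A binary matroid is one representable over the field with two elements. For $x\in X$, $e_x$ is the edge containing $x$; a cord $ab$ is a $T$-cherry if $e_a$ and $e_b$ share a vertex. *)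

theory Defs
  imports Complex_Main "HOL-Library.Z2"
begin

definition is_path :: "'v set \<Rightarrow> 'v set set \<Rightarrow> 'v list \<Rightarrow> bool" where
  "is_path V E ps \<longleftrightarrow> ps \<noteq> [] \<and> distinct ps \<and> set ps \<subseteq> V \<and>
     (\<forall>i. Suc i < length ps \<longrightarrow> {ps ! i, ps ! Suc i} \<in> E)"

definition is_tree :: "'v set \<Rightarrow> 'v set set \<Rightarrow> bool" where
  "is_tree V E \<longleftrightarrow> finite V \<and> V \<noteq> {} \<and> (\<forall>e\<in>E. e \<subseteq> V \<and> card e = 2) \<and>
     (\<forall>u\<in>V. \<forall>v\<in>V. \<exists>!ps. is_path V E ps \<and> hd ps = u \<and> last ps = v)"

definition degree :: "'v set set \<Rightarrow> 'v \<Rightarrow> nat" where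
  "degree E v = card {e\<in>E. v \<in> e}"

definition is_X_tree :: "'v set \<Rightarrow> 'v set set \<Rightarrow> 'v set \<Rightarrow> bool" where
  "is_X_tree V E X \<longleftrightarrow> is_tree V E \<and> X \<subseteq> V \<and> {v\<in>V. degree E v = 1} = X \<and>
     (\<forall>v\<in>V. degree E v \<noteq> 2)"

definition is_binary_X_tree :: "'v set \<Rightarrow> 'v set set \<Rightarrow> 'v set \<Rightarrow> bool" where
  "is_binary_X_tree V E X \<longleftrightarrow> is_X_tree V E X \<and> (\<forall>v\<in>V - X. degree E v = 3)"

definition is_caterpillar :: "'v set \<Rightarrow> 'v set set \<Rightarrow> 'v set \<Rightarrow> bool" where
  "is_caterpillar V E X \<longleftrightarrow> is_binary_X_tree V E X \<and>
     (\<exists>ps. is_path V E ps \<and> V - X \<subseteq> set ps)"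

definition path_edges :: "'v set \<Rightarrow> 'v set set \<Rightarrow> 'v \<Rightarrow> 'v \<Rightarrow> 'v set set" where
  "path_edges V E x y =
     (let ps = (THE ps. is_path V E ps \<and> hd ps = x \<and> last ps = y)
      in {{ps ! i, ps ! Suc i} | i. Suc i < length ps})"

definition cords :: "'v set \<Rightarrow> 'v set set" where
  "cords X = {{x, y} | x y. x \<in> X \<and> y \<in> X \<and> x \<noteq> y}"

definition is_cherry :: "'v set set \<Rightarrow> 'v \<Rightarrow> 'v \<Rightarrow> bool" where
  "is_cherry E a b \<longleftrightarrow> a \<noteq> b \<and>
     (\<exists>ea\<in>E. \<exists>eb\<in>E. a \<in> ea \<and> b \<in> eb \<and> ea \<inter> eb \<noteq> {})"

definition rep_indep :: "('c \<Rightarrow> 'i \<Rightarrow> 'k::comm_ring_1) \<Rightarrow> 'c set \<Rightarrow> bool" where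
  "rep_indep phi S \<longleftrightarrow>
     (\<forall>a. (\<forall>i. (\<Sum>c\<in>S. a c * phi c i) = 0) \<longrightarrow> (\<forall>c\<in>S. a c = 0))"

text \<open>lambda^T_{xy} as a vector in R^E (coefficient of omega(e)); zero outside E.\<close>
definition lam :: "'v set \<Rightarrow> 'v set set \<Rightarrow> 'v set \<Rightarrow> 'v set \<Rightarrow> real" where
  "lam V E c e = (if \<exists>x y. c = {x, y} \<and> e \<in> path_edges V E x y then 1 else 0)"

definition M_indep :: "'v set \<Rightarrow> 'v set set \<Rightarrow> 'v set \<Rightarrow> 'v set set \<Rightarrow> bool" where
  "M_indep V E X S \<longleftrightarrow> S \<subseteq> cords X \<and> rep_indep (lam V E) S"

definition M_circuit :: "'v set \<Rightarrow> 'v set set \<Rightarrow> 'v set \<Rightarrow> 'v set set \<Rightarrow> bool" where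
  "M_circuit V E X C \<longleftrightarrow> C \<subseteq> cords X \<and> \<not> M_indep V E X C \<and>
     (\<forall>D. D \<subset> C \<longrightarrow> M_indep V E X D)"

definition M_binary :: "'v set \<Rightarrow> 'v set set \<Rightarrow> 'v set \<Rightarrow> bool" where
  "M_binary V E X \<longleftrightarrow>
     (\<exists>phi :: 'v set \<Rightarrow> nat \<Rightarrow> bit.
        \<forall>S. S \<subseteq> cords X \<longrightarrow> (M_indep V E X S \<longleftrightarrow> rep_indep phi S))"

end

theory Submission
  imports Defs "HOL-Library.Indicator_Function"
begin

text \<open>Let \<open>p, q, r\<close> be the common neighbours of the cherries \<open>x1 x4\<close>, \<open>x2 x5\<close>, \<open>x3 x6\<close>.
  For leaves \<open>x, y\<close> with neighbours \<open>p\<^sub>x, p\<^sub>y\<close>, the path from \<open>x\<close> to \<open>y\<close> consists of the two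
  pendant edges and the path from \<open>p\<^sub>x\<close> to \<open>p\<^sub>y\<close>; hence \<open>\<lambda>\<^sub>x\<^sub>y\<close> is the sum of the indicators
  of the two pendant edges and \<open>\<lambda>\<close> of \<open>p\<^sub>x p\<^sub>y\<close>. Summing with alternating signs around the
  hexagon \<open>x1 \<dots> x6\<close> and around the square \<open>x1 x3 x4 x6\<close>, everything cancels, so both are
  dependent. Evaluated at the pendant edges, the vectors \<open>\<lambda>\<^sub>x\<^sub>y\<close> become the incidence vectors of
  the cords; these are independent over \<open>\<real>\<close> for a path and for two disjoint triangles, which
  gives the minimality of both circuits and the independence of their symmetric difference.
  Over GF(2) the symmetric difference of two circuits is always dependent, so \<open>M(T)\<close> is not
  binary. Finally, a binary tree that is not a caterpillar has an interior vertex with three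
  interior neighbours, and a longest path into each of the three branches ends in a cherry.\<close>

fun list_edges :: "'v list \<Rightarrow> 'v set set" where
  "list_edges (a # b # ps) = insert {a, b} (list_edges (b # ps))"
| "list_edges _ = {}"

lemma list_edges_conv_nth: "list_edges ps = (\<lambda>i. {ps ! i, ps ! Suc i}) ` {..< length ps - 1}"
  by (induction ps rule: list_edges.induct) (simp_all add: lessThan_Suc_eq_insert_0 image_image)

lemma list_edges_Cons: "ps \<noteq> [] \<Longrightarrow> list_edges (a # ps) = insert {a, hd ps} (list_edges ps)"
  by (cases ps) auto

lemma list_edges_snoc: "ps \<noteq> [] \<Longrightarrow> list_edges (ps @ [a]) = insert {last ps, a} (list_edges ps)"
  by (induction ps rule: list_edges.induct) auto

lemma list_edges_rev: "list_edges (rev ps) = list_edges ps"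
proof (induction ps rule: list_edges.induct)
  case (1 a b ps)
  have "list_edges (rev (a # b # ps)) = insert {b, a} (list_edges (rev (b # ps)))"
    using list_edges_snoc[of "rev (b # ps)" a] by simp
  also have "\<dots> = insert {a, b} (list_edges (b # ps))"
    using "1.IH" by (metis insert_commute)
  also have "\<dots> = list_edges (a # b # ps)" by simp
  finally show ?case .
qed auto

lemma list_edges_subset: "e \<in> list_edges ps \<Longrightarrow> e \<subseteq> set ps"
  by (induction ps rule: list_edges.induct) auto

lemma finite_list_edges [simp]: "finite (list_edges ps)"
  by (induction ps rule: list_edges.induct) auto

lemma list_edges_subset_cords: "distinct ps \<Longrightarrow> set ps \<subseteq> X \<Longrightarrow> list_edges ps \<subseteq> cords X"
  by (induction ps rule: list_edges.induct) (auto simp: cords_def)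


section \<open>Linear independence of representations\<close>

lemma not_rep_indepI:
  assumes "\<forall>i. (\<Sum>c\<in>S. a c * phi c i) = 0" "c \<in> S" "a c \<noteq> 0"
  shows "\<not> rep_indep phi S"
  using assms unfolding rep_indep_def by blast

lemma rep_indep_subset:
  assumes "rep_indep phi T" "S \<subseteq> T" "finite T" shows "rep_indep phi S"
  unfolding rep_indep_def
proof (intro allI impI ballI)
  fix a c assume sum0: "\<forall>i. (\<Sum>c\<in>S. a c * phi c i) = 0" and "c \<in> S"
  define b where "b c = (if c \<in> S then a c else 0)" for c
  have "(\<Sum>c\<in>T. b c * phi c i) = (\<Sum>c\<in>S. b c * phi c i)" for i
    using assms(2,3) by (intro sum.mono_neutral_right) (auto simp: b_def)
  moreover have "(\<Sum>c\<in>S. b c * phi c i) = (\<Sum>c\<in>S. a c * phi c i)" for i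
    by (simp add: b_def)
  ultimately have "\<forall>c\<in>T. b c = 0" using assms(1) sum0 unfolding rep_indep_def by simp
  then show "a c = 0" using \<open>c \<in> S\<close> assms(2) by (force simp: b_def)
qed

lemma rep_indep_insert:
  fixes phi :: "'c \<Rightarrow> 'i \<Rightarrow> 'k::idom"
  assumes "finite S" "rep_indep phi S" "phi c i \<noteq> 0" "\<forall>d\<in>S. phi d i = 0"
  shows "rep_indep phi (insert c S)"
  unfolding rep_indep_def
proof (intro allI impI)
  fix a assume sum0: "\<forall>j. (\<Sum>d\<in>insert c S. a d * phi d j) = 0"
  have "c \<notin> S" using assms(3,4) by blast
  moreover have "(\<Sum>d\<in>S. a d * phi d i) = 0" using assms(4) by simp
  ultimately have "a c * phi c i = 0" using sum0[rule_format, of i] assms(1) by simp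
  then have "a c = 0" using assms(3) by simp
  then have "\<forall>j. (\<Sum>d\<in>S. a d * phi d j) = 0" using sum0 assms(1) \<open>c \<notin> S\<close> by simp
  then show "\<forall>d\<in>insert c S. a d = 0" using assms(2) \<open>a c = 0\<close> unfolding rep_indep_def by blast
qed

lemma rep_indep_list_edges:
  "distinct ps \<Longrightarrow> rep_indep (indicator :: 'v set \<Rightarrow> 'v \<Rightarrow> 'k::idom) (list_edges ps)"
proof (induction ps rule: list_edges.induct)
  case (1 a b ps)
  have "rep_indep (indicator :: 'v set \<Rightarrow> 'v \<Rightarrow> 'k) (list_edges (b # ps))"
    using "1" by simp
  moreover have "indicator {a, b} a \<noteq> (0::'k)" by simp
  moreover have "\<forall>e\<in>list_edges (b # ps). indicator e a = (0::'k)"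
    using "1.prems" list_edges_subset by (fastforce simp: indicator_def)
  ultimately show ?case unfolding list_edges.simps(1) by (rule rep_indep_insert[OF finite_list_edges])
qed (simp_all add: rep_indep_def)

lemma zero_if_pairwise_sums_zero:
  fixes x y z :: "'k::field_char_0"
  assumes "x + z = 0" "x + y = 0" "y + z = 0"
  shows "x = 0" "y = 0" "z = 0"
proof -
  have "2 * z = 0" using assms by (simp add: algebra_simps eq_neg_iff_add_eq_0[symmetric])
  then show "z = 0" by simp
  then show "x = 0" "y = 0" using assms by simp_all
qed

text \<open>Characteristic 0 matters: over GF(2) the incidence vectors of a triangle sum to zero.\<close>
lemma rep_indep_two_triangles:
  fixes a b c d e f :: 'v
  assumes "distinct [a, b, c, d, e, f]"
  shows "rep_indep (indicator :: 'v set \<Rightarrow> 'v \<Rightarrow> 'k::field_char_0)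
    {{a, b}, {b, c}, {c, a}, {d, e}, {e, f}, {f, d}}" (is "rep_indep _ ?T")
  unfolding rep_indep_def
proof (intro allI impI)
  fix s assume sums: "\<forall>v. (\<Sum>x\<in>?T. s x * indicator x v) = (0::'k)"
  have expand:  "(\<Sum>x\<in>?T. g x) = g {a, b} + g {b, c} + g {c, a} + g {d, e} + g {e, f} + g {f, d}"
    for g :: "'v set \<Rightarrow> 'k"
    using assms by (auto simp: doubleton_eq_iff add.assoc)
  have "s {a, b} + s {c, a} = 0" "s {a, b} + s {b, c} = 0" "s {b, c} + s {c, a} = 0"
    and "s {d, e} + s {f, d} = 0" "s {d, e} + s {e, f} = 0" "s {e, f} + s {f, d} = 0"
    using sums[rule_format, of a] sums[rule_format, of b] sums[rule_format, of c]
      sums[rule_format, of d] sums[rule_format, of e] sums[rule_format, of f] assms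
    unfolding expand by (auto simp: indicator_def)
  from zero_if_pairwise_sums_zero[OF this(1-3)] zero_if_pairwise_sums_zero[OF this(4-6)]
  show "\<forall>x\<in>?T. s x = 0" by auto
qed

lemma sum_circuit_bit:
  fixes phi :: "'c \<Rightarrow> 'i \<Rightarrow> bit"
  assumes "finite C" "\<not> rep_indep phi C" "\<forall>c\<in>C. rep_indep phi (C - {c})"
  shows "(\<Sum>c\<in>C. phi c i) = 0"
proof -
  obtain a c0 where a: "\<forall>i. (\<Sum>c\<in>C. a c * phi c i) = 0" and "c0 \<in> C" "a c0 \<noteq> 0"
    using assms(2) unfolding rep_indep_def by blast
  have ones: "a c = 1" if "c \<in> C" for c
  proof (rule ccontr)
    assume "a c \<noteq> 1"
    then have "a c = 0" by simp
    have "(\<Sum>x\<in>C - {c}. a x * phi x j) = 0" for j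
    proof -
      have "(\<Sum>x\<in>C. a x * phi x j) = a c * phi c j + (\<Sum>x\<in>C - {c}. a x * phi x j)"
        by (rule sum.remove[OF assms(1) that])
      then show ?thesis using a \<open>a c = 0\<close> by (metis add_0 mult_zero_left)
    qed
    then have "\<forall>x\<in>C - {c}. a x = 0" using assms(3) that unfolding rep_indep_def by blast
    then show False using \<open>c0 \<in> C\<close> \<open>a c0 \<noteq> 0\<close> \<open>a c = 0\<close> by (cases "c0 = c") auto
  qed
  have "(\<Sum>c\<in>C. phi c i) = (\<Sum>c\<in>C. a c * phi c i)"
    by (rule sum.cong[OF refl]) (simp only: ones mult_1)
  then show ?thesis using a by metis
qed

lemma sum_symmetric_difference_bit:
  fixes f :: "'c \<Rightarrow> bit"
  assumes "finite A" "finite B"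
  shows "sum f ((A - B) \<union> (B - A)) = sum f A + sum f B"
proof -
  have A: "sum f A = sum f (A - B) + sum f (A \<inter> B)"
    using sum.Int_Diff[OF assms(1), of f B] by (simp only: add.commute)
  have B: "sum f B = sum f (B - A) + sum f (A \<inter> B)"
    using sum.Int_Diff[OF assms(2), of f A] by (simp only: add.commute Int_commute)
  have self_inverse: "x + x = 0" for x :: bit by (cases x) simp_all
  have "sum f ((A - B) \<union> (B - A)) = sum f (A - B) + sum f (B - A)"
    using assms by (intro sum.union_disjoint) auto
  also have "\<dots> = sum f (A - B) + sum f (B - A) + (sum f (A \<inter> B) + sum f (A \<inter> B))"
    by (simp only: self_inverse add_0_right)
  also have "\<dots> = sum f A + sum f B"
    unfolding A B by (simp only: add_ac)
  finally show ?thesis .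
qed


lemma cord_in_cords: "x \<in> X \<Longrightarrow> y \<in> X \<Longrightarrow> x \<noteq> y \<Longrightarrow> {x, y} \<in> cords X"
  unfolding cords_def by blast

lemma finite_cords: "finite X \<Longrightarrow> finite (cords X)"
  unfolding cords_def by (rule finite_subset[of _ "Pow X"]) auto

lemma M_circuitI:
  fixes X :: "'v set"
  assumes "finite X" "C \<subseteq> cords X" "\<not> rep_indep (lam V E) C"
    and "\<And>c. c \<in> C \<Longrightarrow> rep_indep (lam V E) (C - {c})"
  shows "M_circuit V E X C"
  unfolding M_circuit_def M_indep_def
proof (intro conjI allI impI)
  show "C \<subseteq> cords X" "\<not> (C \<subseteq> cords X \<and> rep_indep (lam V E) C)" using assms(2,3) by blast+
  fix D assume "D \<subset> C"
  then show "D \<subseteq> cords X" using assms(2) by blast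
  obtain c where "c \<in> C" "D \<subseteq> C - {c}" using \<open>D \<subset> C\<close> by blast
  moreover have "finite C" using finite_cords[OF assms(1)] assms(2) finite_subset by blast
  ultimately show "rep_indep (lam V E) D" using rep_indep_subset assms(4) by (meson finite_Diff)
qed

text \<open>Over GF(2) the circuits are the minimal sets summing to zero, so the symmetric difference
  of two distinct circuits also sums to zero.\<close>
lemma symmetric_difference_of_circuits_dependent_if_binary:
  fixes X :: "'v set"
  assumes "finite X" "M_binary V E X" "M_circuit V E X C1" "M_circuit V E X C2" "C1 \<noteq> C2"
  shows "\<not> M_indep V E X ((C1 - C2) \<union> (C2 - C1))"
proof
  assume indep: "M_indep V E X ((C1 - C2) \<union> (C2 - C1))"
  obtain phi :: "'v set \<Rightarrow> nat \<Rightarrow> bit"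
    where phi: "\<And>S. S \<subseteq> cords X \<Longrightarrow> M_indep V E X S \<longleftrightarrow> rep_indep phi S"
    using assms(2) unfolding M_binary_def by blast
  have circuit_cords: "C \<subseteq> cords X" if "M_circuit V E X C" for C
    using that unfolding M_circuit_def by blast
  have finite_circuit: "finite C" if "M_circuit V E X C" for C
    using circuit_cords[OF that] finite_cords[OF assms(1)] finite_subset by blast
  have circuit_sum: "(\<Sum>c\<in>C. phi c i) = 0" if "M_circuit V E X C" for C i
  proof (rule sum_circuit_bit[OF finite_circuit[OF that]])
    show "\<not> rep_indep phi C" using that phi[OF circuit_cords[OF that]] unfolding M_circuit_def by blast
    show "\<forall>c\<in>C. rep_indep phi (C - {c})"
    proof
      fix c assume "c \<in> C"
      then have "C - {c} \<subset> C" by blast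
      then have "M_indep V E X (C - {c})" using that unfolding M_circuit_def by blast
      then show "rep_indep phi (C - {c})" using phi circuit_cords[OF that] by blast
    qed
  qed
  have sum0: "(\<Sum>c\<in>(C1 - C2) \<union> (C2 - C1). 1 * phi c i) = 0" for i
    unfolding mult_1
      sum_symmetric_difference_bit[OF finite_circuit[OF assms(3)] finite_circuit[OF assms(4)]]
    by (simp only: circuit_sum assms(3,4) add_0)
  obtain c where "c \<in> (C1 - C2) \<union> (C2 - C1)" using assms(5) by blast
  have "\<not> rep_indep phi ((C1 - C2) \<union> (C2 - C1))"
    by (rule not_rep_indepI[where a = "\<lambda>_. 1 :: bit", OF allI[OF sum0] \<open>c \<in> _\<close>]) simp
  moreover have "(C1 - C2) \<union> (C2 - C1) \<subseteq> cords X"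
    using circuit_cords assms(3,4) by blast
  ultimately show False using phi indep by blast
qed


section \<open>X-trees\<close>

locale x_tree =
  fixes V :: "'v set" and E :: "'v set set" and X :: "'v set"
  assumes X_tree: "is_X_tree V E X"
begin

lemma tree: "is_tree V E"
  using X_tree by (simp add: is_X_tree_def)

lemma finite_V: "finite V"
  using tree by (simp add: is_tree_def)

lemma edge_subset: "e \<in> E \<Longrightarrow> e \<subseteq> V"
  using tree by (simp add: is_tree_def)

lemma card_edge: "e \<in> E \<Longrightarrow> card e = 2"
  using tree by (simp add: is_tree_def)

lemma finite_E: "finite E"
  using finite_V edge_subset by (meson PowI finite_Pow_iff finite_subset subsetI)

lemma leaf_iff: "x \<in> X \<longleftrightarrow> x \<in> V \<and> degree E x = 1"
  using X_tree by (auto simp: is_X_tree_def)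

lemma finite_X: "finite X"
  using finite_V leaf_iff by (meson finite_subset subsetI)

lemma edge_vertices: "{a, b} \<in> E \<Longrightarrow> a \<noteq> b \<and> a \<in> V \<and> b \<in> V"
  using card_edge edge_subset by fastforce

lemma edge_from: assumes "e \<in> E" "v \<in> e" obtains w where "e = {v, w}" "w \<noteq> v" "w \<in> V"
proof -
  obtain a b where "e = {a, b}" "a \<noteq> b" using card_edge[OF assms(1)] card_2_iff by metis
  then show thesis using that assms edge_subset[OF assms(1)] by (auto simp: insert_commute)
qed

lemma path_edge: "is_path V E ps \<Longrightarrow> Suc i < length ps \<Longrightarrow> {ps ! i, ps ! Suc i} \<in> E"
  unfolding is_path_def by auto

lemma path_ends: "is_path V E ps \<Longrightarrow> hd ps \<in> V \<and> last ps \<in> V"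
  unfolding is_path_def by auto

lemma path_exists: "u \<in> V \<Longrightarrow> v \<in> V \<Longrightarrow> \<exists>ps. is_path V E ps \<and> hd ps = u \<and> last ps = v"
  using tree unfolding is_tree_def by blast

lemma path_unique:
  assumes "is_path V E ps" "is_path V E qs" "hd ps = hd qs" "last ps = last qs"
  shows "ps = qs"
  using tree path_ends[OF assms(1)] assms unfolding is_tree_def by metis

lemma path_singleton: "a \<in> V \<Longrightarrow> is_path V E [a]"
  unfolding is_path_def by auto

lemma path_doubleton: "{a, b} \<in> E \<Longrightarrow> is_path V E [a, b]"
  unfolding is_path_def using edge_vertices by (auto simp: less_Suc_eq)

lemma path_take: "is_path V E ps \<Longrightarrow> 0 < k \<Longrightarrow> is_path V E (take k ps)"
  unfolding is_path_def by (auto dest: in_set_takeD)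

lemma path_drop: "is_path V E ps \<Longrightarrow> k < length ps \<Longrightarrow> is_path V E (drop k ps)"
  unfolding is_path_def by (auto dest: in_set_dropD simp: add.commute[of k])

lemma path_snoc:
  assumes "is_path V E ps" "t \<in> V" "t \<notin> set ps" "{last ps, t} \<in> E"
  shows "is_path V E (ps @ [t])"
  unfolding is_path_def
proof (intro conjI allI impI)
  show "ps @ [t] \<noteq> []" "distinct (ps @ [t])" "set (ps @ [t]) \<subseteq> V"
    using assms unfolding is_path_def by auto
  fix i assume i: "Suc i < length (ps @ [t])"
  show "{(ps @ [t]) ! i, (ps @ [t]) ! Suc i} \<in> E"
  proof (cases "Suc i < length ps")
    case True
    then show ?thesis using path_edge[OF assms(1) True] by (simp add: nth_append)
  next
    case False
    then have "i = length ps - 1" "ps \<noteq> []" using i assms(1) by (auto simp: is_path_def)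
    then show ?thesis using assms(4) by (simp add: nth_append last_conv_nth)
  qed
qed

lemma path_Cons:
  assumes "is_path V E ps" "t \<in> V" "t \<notin> set ps" "{t, hd ps} \<in> E"
  shows "is_path V E (t # ps)"
  unfolding is_path_def
proof (intro conjI allI impI)
  show "t # ps \<noteq> []" "distinct (t # ps)" "set (t # ps) \<subseteq> V"
    using assms unfolding is_path_def by auto
  fix i assume i: "Suc i < length (t # ps)"
  show "{(t # ps) ! i, (t # ps) ! Suc i} \<in> E"
  proof (cases i)
    case 0
    then show ?thesis using assms(1,4) by (simp add: is_path_def hd_conv_nth)
  next
    case (Suc j)
    then show ?thesis using path_edge[OF assms(1), of j] i by simp
  qed
qed

lemma path_rev: assumes "is_path V E ps" shows "is_path V E (rev ps)"
  unfolding is_path_def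
proof (intro conjI allI impI)
  show "rev ps \<noteq> []" "distinct (rev ps)" "set (rev ps) \<subseteq> V"
    using assms unfolding is_path_def by auto
  fix i assume i: "Suc i < length (rev ps)"
  have "{ps ! (length ps - Suc (Suc i)), ps ! Suc (length ps - Suc (Suc i))} \<in> E"
    using path_edge[OF assms, of "length ps - Suc (Suc i)"] i by simp
  moreover have "Suc (length ps - Suc (Suc i)) = length ps - Suc i" using i by simp
  ultimately show "{rev ps ! i, rev ps ! Suc i} \<in> E"
    using i by (simp add: rev_nth insert_commute)
qed

lemma path_length_ge_2: "is_path V E ps \<Longrightarrow> hd ps \<noteq> last ps \<Longrightarrow> 2 \<le> length ps"
  unfolding is_path_def by (cases ps) (auto simp: Suc_le_eq)

text \<open>By uniqueness of paths, a chord of a path would close a cycle.\<close>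
lemma path_chord:
  assumes "is_path V E ps" "i < j" "j < length ps" "{ps ! i, ps ! j} \<in> E"
  shows "j = Suc i"
proof -
  define qs where "qs = drop i (take (Suc j) ps)"
  have "is_path V E qs"
    unfolding qs_def using path_drop[OF path_take[OF assms(1), of "Suc j"]] assms by simp
  moreover have "hd qs = ps ! i" "last qs = ps ! j"
    using assms by (simp_all add: qs_def hd_drop_conv_nth take_Suc_conv_app_nth)
  ultimately have "qs = [ps ! i, ps ! j]"
    using path_unique path_doubleton[OF assms(4)] by fastforce
  then have "length qs = 2" by simp
  then show ?thesis using assms by (simp add: qs_def)
qed

lemma path_edges_eq_list_edges:
  assumes "is_path V E ps" shows "path_edges V E (hd ps) (last ps) = list_edges ps"
proof -
  have "(THE qs. is_path V E qs \<and> hd qs = hd ps \<and> last qs = last ps) = ps"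
    using assms path_unique by (intro the_equality) auto
  moreover have "{i. Suc i < length ps} = {..< length ps - 1}" by auto
  ultimately show ?thesis
    unfolding path_edges_def list_edges_conv_nth by (simp add: setcompr_eq_image)
qed

lemma path_edges_sym: "x \<in> V \<Longrightarrow> y \<in> V \<Longrightarrow> path_edges V E x y = path_edges V E y x"
  using path_exists path_edges_eq_list_edges path_rev list_edges_rev
  by (metis hd_rev last_rev)

lemma lam_eq_indicator: "x \<in> V \<Longrightarrow> y \<in> V \<Longrightarrow> lam V E {x, y} = indicator (path_edges V E x y)"
  unfolding lam_def indicator_def using path_edges_sym by (fastforce simp: doubleton_eq_iff)


lemma degree_ge_2: assumes "{a, v} \<in> E" "{v, b} \<in> E" "a \<noteq> b" shows "2 \<le> degree E v"
proof -
  have "card {{a, v}, {v, b}} = 2" using assms edge_vertices by (auto simp: doubleton_eq_iff)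
  moreover have "{{a, v}, {v, b}} \<subseteq> {e\<in>E. v \<in> e}" using assms by auto
  then have "card {{a, v}, {v, b}} \<le> degree E v"
    unfolding degree_def using finite_E by (intro card_mono) auto
  ultimately show ?thesis by simp
qed

lemma leaf_neighbour_unique:
  assumes "x \<in> X" "{x, p} \<in> E" "{x, q} \<in> E" shows "p = q"
proof (rule ccontr)
  assume "p \<noteq> q"
  moreover have "{p, x} \<in> E" using assms(2) by (simp add: insert_commute)
  ultimately have "2 \<le> degree E x" using degree_ge_2 assms(3) by blast
  then show False using assms(1) leaf_iff by simp
qed

lemma leaf_has_neighbour: assumes "x \<in> X" obtains p where "{x, p} \<in> E"
proof -
  have "{e\<in>E. x \<in> e} \<noteq> {}" using assms leaf_iff unfolding degree_def by force
  then show thesis using that edge_from by blast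
qed

lemma leaf_in_path:
  assumes "is_path V E ps" "x \<in> X" "x \<in> set ps" shows "x = hd ps \<or> x = last ps"
proof (rule ccontr)
  assume inner: "\<not> (x = hd ps \<or> x = last ps)"
  obtain i where i: "i < length ps" "ps ! i = x" using assms(3) by (metis in_set_conv_nth)
  have "ps \<noteq> []" using i(1) by auto
  have "i \<noteq> 0" using inner i \<open>ps \<noteq> []\<close> by (metis hd_conv_nth)
  moreover have "i \<noteq> length ps - 1" using inner i \<open>ps \<noteq> []\<close> by (metis last_conv_nth)
  ultimately have "0 < i" "Suc i < length ps" using i by auto
  then have "{ps ! (i - 1), x} \<in> E" "{x, ps ! Suc i} \<in> E"
    using path_edge[OF assms(1), of "i - 1"] path_edge[OF assms(1), of i] i by auto
  moreover have "ps ! (i - 1) \<noteq> ps ! Suc i"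
    using assms(1) \<open>Suc i < length ps\<close> unfolding is_path_def by (simp add: nth_eq_iff_index_eq)
  ultimately have "2 \<le> degree E x" by (rule degree_ge_2)
  then show False using assms(2) leaf_iff by simp
qed

lemma leaf_neighbour_not_leaf:
  assumes "x \<in> X" "{x, p} \<in> E" "3 \<le> card X" shows "p \<notin> X"
proof
  assume "p \<in> X"
  have "card {x, p} \<le> 2" by (cases "x = p") auto
  then have "card {x, p} < card X" using assms(3) by simp
  then have "\<not> X \<subseteq> {x, p}" using card_mono[of "{x, p}" X] by auto
  then obtain z where z: "z \<in> X" "z \<noteq> x" "z \<noteq> p" by blast
  obtain ps where ps: "is_path V E ps" "hd ps = x" "last ps = z"
    using path_exists assms(1) z(1) leaf_iff by blast
  then have "2 \<le> length ps" using path_length_ge_2 z by simp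
  then have "{x, ps ! 1} \<in> E"
    using path_edge[OF ps(1), of 0] ps(2) hd_conv_nth[of ps] by fastforce
  then have "ps ! 1 = p" using leaf_neighbour_unique[OF assms(1,2)] by simp
  then have "p \<in> set ps" using nth_mem[of 1 ps] \<open>2 \<le> length ps\<close> by simp
  then show False using leaf_in_path[OF ps(1) \<open>p \<in> X\<close>] ps z edge_vertices[OF assms(2)] by auto
qed

lemma leaf_edge_notin_path_edges:
  assumes "z \<in> X" "z \<in> e" "p \<in> V" "q \<in> V" "z \<noteq> p" "z \<noteq> q"
  shows "e \<notin> path_edges V E p q"
proof
  assume "e \<in> path_edges V E p q"
  obtain ps where ps: "is_path V E ps" "hd ps = p" "last ps = q" using path_exists assms by blast
  then have "z \<in> set ps"
    using \<open>e \<in> path_edges V E p q\<close> path_edges_eq_list_edges list_edges_subset assms(2) by blast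
  then show False using leaf_in_path ps assms by blast
qed

lemma path_edges_between_leaves:
  assumes "x \<in> X" "y \<in> X" "x \<noteq> y" "{x, p} \<in> E" "{y, q} \<in> E" "p \<notin> X" "q \<notin> X"
  shows "path_edges V E x y = insert {x, p} (insert {y, q} (path_edges V E p q))"
proof -
  have V: "x \<in> V" "y \<in> V" "p \<in> V" "q \<in> V" using edge_vertices assms(4,5) by auto
  obtain ps where ps: "is_path V E ps" "hd ps = p" "last ps = q" using path_exists V by blast
  have "ps \<noteq> []" using ps(1) by (simp add: is_path_def)
  have "x \<notin> set ps" "y \<notin> set ps" using leaf_in_path ps assms by blast+
  moreover have "{last ps, y} \<in> E" using assms(5) ps(3) by (simp add: insert_commute)
  ultimately have "is_path V E (x # ps @ [y])"
    using path_Cons[OF path_snoc[OF ps(1)]] V assms(3,4) ps(2) \<open>ps \<noteq> []\<close> by simp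
  then have "path_edges V E x y = list_edges (x # ps @ [y])"
    using path_edges_eq_list_edges by fastforce
  also have "\<dots> = insert {x, p} (insert {q, y} (list_edges ps))"
    using \<open>ps \<noteq> []\<close> ps by (simp add: list_edges_Cons list_edges_snoc)
  finally show ?thesis
    using path_edges_eq_list_edges[OF ps(1)] ps insert_commute[of q y "{}"] by simp
qed

lemma lam_cord_between_leaves:
  assumes "x \<in> X" "y \<in> X" "x \<noteq> y" "{x, p} \<in> E" "{y, q} \<in> E" "p \<notin> X" "q \<notin> X"
  shows "lam V E {x, y} e = of_bool (e = {x, p}) + of_bool (e = {y, q}) + lam V E {p, q} e"
proof -
  have V: "x \<in> V" "y \<in> V" "p \<in> V" "q \<in> V" using edge_vertices assms(4,5) by auto
  have "{x, p} \<notin> path_edges V E p q" "{y, q} \<notin> path_edges V E p q"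
    using leaf_edge_notin_path_edges[of x "{x, p}" p q] leaf_edge_notin_path_edges[of y "{y, q}" p q]
      V assms by auto
  moreover have "{x, p} \<noteq> {y, q}" using assms by (auto simp: doubleton_eq_iff)
  ultimately show ?thesis
    using path_edges_between_leaves[OF assms] lam_eq_indicator V by (auto simp: indicator_def)
qed

lemma lam_cord_pendant_edge:
  assumes "x \<in> X" "y \<in> X" "x \<noteq> y" "z \<in> X" "{z, w} \<in> E" "3 \<le> card X"
  shows "lam V E {x, y} {z, w} = indicator {x, y} z"
proof -
  obtain p q where pq: "{x, p} \<in> E" "{y, q} \<in> E"
    using leaf_has_neighbour assms(1,2) by metis
  have inner: "p \<notin> X" "q \<notin> X" "w \<notin> X"
    using leaf_neighbour_not_leaf pq assms by blast+
  have "{z, w} = {x, p} \<longleftrightarrow> z = x" "{z, w} = {y, q} \<longleftrightarrow> z = y"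
    using leaf_neighbour_unique pq assms(4,5) inner by (auto simp: doubleton_eq_iff)
  moreover have "{z, w} \<notin> path_edges V E p q"
    using leaf_edge_notin_path_edges[of z "{z, w}" p q] edge_vertices pq inner assms(4) by auto
  then have "lam V E {p, q} {z, w} = 0"
    using lam_eq_indicator edge_vertices pq by (simp add: indicator_def)
  ultimately show ?thesis
    using lam_cord_between_leaves[OF assms(1-3) pq inner(1,2)] assms(3) by (auto simp: indicator_def)
qed

text \<open>Evaluated at the pendant edges, the vectors \<open>\<lambda>\<^sub>x\<^sub>y\<close> are the incidence vectors of the
  cords.\<close>
lemma rep_indep_lam_if_indicator:
  assumes "3 \<le> card X" "S \<subseteq> cords X" "rep_indep (indicator :: 'v set \<Rightarrow> 'v \<Rightarrow> real) S"
  shows "rep_indep (lam V E) S"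
  unfolding rep_indep_def
proof (intro allI impI)
  fix a assume lam_sum: "\<forall>e. (\<Sum>c\<in>S. a c * lam V E c e) = 0"
  have "(\<Sum>c\<in>S. a c * indicator c z) = 0" for z
  proof (cases "z \<in> X")
    case True
    then obtain w where "{z, w} \<in> E" by (rule leaf_has_neighbour)
    then have "lam V E c {z, w} = indicator c z" if "c \<in> S" for c
      using that assms lam_cord_pendant_edge True unfolding cords_def by auto
    then have "(\<Sum>c\<in>S. a c * indicator c z) = (\<Sum>c\<in>S. a c * lam V E c {z, w})" by simp
    then show ?thesis using lam_sum by simp
  next
    case False
    then have "indicator c z = (0::real)" if "c \<in> S" for c
      using that assms(2) unfolding cords_def by (auto simp: indicator_def)
    then show ?thesis by simp
  qed
  then show "\<forall>c\<in>S. a c = 0" using assms(3) unfolding rep_indep_def by blast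
qed

lemma cherry_common_neighbour:
  assumes "is_cherry E x y" "x \<in> X" "y \<in> X" "3 \<le> card X"
  obtains p where "{x, p} \<in> E" "{y, p} \<in> E"
proof -
  obtain ex ey where e: "ex \<in> E" "ey \<in> E" "x \<in> ex" "y \<in> ey" "ex \<inter> ey \<noteq> {}" "x \<noteq> y"
    using assms(1) unfolding is_cherry_def by blast
  obtain p q where pq: "ex = {x, p}" "ey = {y, q}" using edge_from e by metis
  have "p \<notin> X" "q \<notin> X" using leaf_neighbour_not_leaf pq e assms by blast+
  then have "p = q" using e pq assms(2,3) by auto
  then show thesis using that e pq by blast
qed

lemma rep_indep_lam_list_edges:
  assumes "3 \<le> card X" "distinct ps" "set ps \<subseteq> X" "S = list_edges ps"
  shows "rep_indep (lam V E) S"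
proof (rule rep_indep_lam_if_indicator[OF assms(1)])
  show "S \<subseteq> cords X" using list_edges_subset_cords assms(2-4) by blast
  show "rep_indep (indicator :: 'v set \<Rightarrow> 'v \<Rightarrow> real) S"
    using rep_indep_list_edges[OF assms(2)] assms(4) by simp
qed

end


section \<open>Six leaves in three cherries\<close>

locale three_cherries = x_tree +
  fixes x1 x2 x3 x4 x5 x6 p q r :: 'v
  assumes leaves: "x1 \<in> X" "x2 \<in> X" "x3 \<in> X" "x4 \<in> X" "x5 \<in> X" "x6 \<in> X"
    and distinct_leaves: "distinct [x1, x2, x3, x4, x5, x6]"
    and cherry_edges: "{x1, p} \<in> E" "{x4, p} \<in> E" "{x2, q} \<in> E" "{x5, q} \<in> E"
      "{x3, r} \<in> E" "{x6, r} \<in> E"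
begin

definition "hexagon = {{x1, x2}, {x2, x3}, {x3, x4}, {x4, x5}, {x5, x6}, {x6, x1}}"
definition "square = {{x1, x3}, {x3, x4}, {x4, x6}, {x6, x1}}"
definition "two_triangles = {{x1, x2}, {x2, x3}, {x3, x1}, {x4, x5}, {x5, x6}, {x6, x4}}"

text \<open>Both orientations, for the simplifier.\<close>
lemma leaves_neq:
  "x1 \<noteq> x2" "x1 \<noteq> x3" "x1 \<noteq> x4" "x1 \<noteq> x5" "x1 \<noteq> x6" "x2 \<noteq> x3" "x2 \<noteq> x4" "x2 \<noteq> x5"
  "x2 \<noteq> x6" "x3 \<noteq> x4" "x3 \<noteq> x5" "x3 \<noteq> x6" "x4 \<noteq> x5" "x4 \<noteq> x6" "x5 \<noteq> x6"
  "x2 \<noteq> x1" "x3 \<noteq> x1" "x4 \<noteq> x1" "x5 \<noteq> x1" "x6 \<noteq> x1" "x3 \<noteq> x2" "x4 \<noteq> x2" "x5 \<noteq> x2"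
  "x6 \<noteq> x2" "x4 \<noteq> x3" "x5 \<noteq> x3" "x6 \<noteq> x3" "x5 \<noteq> x4" "x6 \<noteq> x4" "x6 \<noteq> x5"
  using distinct_leaves by auto

lemma three_le_card_X: "3 \<le> card X"
proof -
  have "6 = card (set [x1, x2, x3, x4, x5, x6])" using distinct_card[OF distinct_leaves] by simp
  also have "\<dots> \<le> card X" using leaves finite_X by (intro card_mono) auto
  finally show ?thesis by simp
qed

lemma parents_not_leaves: "p \<notin> X" "q \<notin> X" "r \<notin> X"
  using leaf_neighbour_not_leaf[OF leaves(1) cherry_edges(1) three_le_card_X]
    leaf_neighbour_not_leaf[OF leaves(2) cherry_edges(3) three_le_card_X]
    leaf_neighbour_not_leaf[OF leaves(3) cherry_edges(5) three_le_card_X] by auto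

lemma configuration_cords: "hexagon \<subseteq> cords X" "square \<subseteq> cords X" "two_triangles \<subseteq> cords X"
  unfolding hexagon_def square_def two_triangles_def
  using leaves leaves_neq by (simp_all add: cord_in_cords)

text \<open>Each \<open>\<lambda>\<close> splits as in \<open>lam_cord_between_leaves\<close>; going around the cycle, every
  pendant edge occurs twice with opposite signs, and since cherry partners share their
  neighbour, the \<open>\<lambda>\<close>'s between \<open>p, q, r\<close> cancel in pairs as well.\<close>
lemma hexagon_dependent: "\<not> rep_indep (lam V E) hexagon"
proof (rule not_rep_indepI)
  define sign where "sign c = (if c \<in> {{x1, x2}, {x3, x4}, {x5, x6}} then 1 else - 1 :: real)" for c
  show "\<forall>e. (\<Sum>c\<in>hexagon. sign c * lam V E c e) = 0"
  proof
    fix e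
    have "(\<Sum>c\<in>hexagon. sign c * lam V E c e) = lam V E {x1, x2} e - lam V E {x2, x3} e
      + lam V E {x3, x4} e - lam V E {x4, x5} e + lam V E {x5, x6} e - lam V E {x6, x1} e"
      unfolding hexagon_def sign_def using leaves_neq by (simp add: doubleton_eq_iff)
    also have "\<dots> = 0"
      using lam_cord_between_leaves[of x1 x2 p q e] lam_cord_between_leaves[of x2 x3 q r e]
        lam_cord_between_leaves[of x3 x4 r p e] lam_cord_between_leaves[of x4 x5 p q e]
        lam_cord_between_leaves[of x5 x6 q r e] lam_cord_between_leaves[of x6 x1 r p e]
        leaves leaves_neq cherry_edges parents_not_leaves
      by simp
    finally show "(\<Sum>c\<in>hexagon. sign c * lam V E c e) = 0" .
  qed
  show "{x1, x2} \<in> hexagon" "sign {x1, x2} \<noteq> 0" by (simp_all add: hexagon_def sign_def)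
qed

lemma square_dependent: "\<not> rep_indep (lam V E) square"
proof (rule not_rep_indepI)
  define sign where "sign c = (if c \<in> {{x1, x3}, {x4, x6}} then 1 else - 1 :: real)" for c
  show "\<forall>e. (\<Sum>c\<in>square. sign c * lam V E c e) = 0"
  proof
    fix e
    have "(\<Sum>c\<in>square. sign c * lam V E c e)
      = lam V E {x1, x3} e - lam V E {x3, x4} e + lam V E {x4, x6} e - lam V E {x6, x1} e"
      unfolding square_def sign_def using leaves_neq by (simp add: doubleton_eq_iff)
    also have "\<dots> = 0"
      using lam_cord_between_leaves[of x1 x3 p r e] lam_cord_between_leaves[of x3 x4 r p e]
        lam_cord_between_leaves[of x4 x6 p r e] lam_cord_between_leaves[of x6 x1 r p e]
        leaves leaves_neq cherry_edges parents_not_leaves insert_commute[of r p "{}"]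
      by simp
    finally show "(\<Sum>c\<in>square. sign c * lam V E c e) = 0" .
  qed
  show "{x1, x3} \<in> square" "sign {x1, x3} \<noteq> 0" by (simp_all add: square_def sign_def)
qed

lemma hexagon_minus_edge_indep:
  assumes "c \<in> hexagon" shows "rep_indep (lam V E) (hexagon - {c})"
proof -
  note path_indep = rep_indep_lam_list_edges[OF three_le_card_X]
  from assms consider "c = {x1, x2}" | "c = {x2, x3}" | "c = {x3, x4}" | "c = {x4, x5}"
    | "c = {x5, x6}" | "c = {x6, x1}"
    unfolding hexagon_def by blast
  then show ?thesis
  proof cases
    case 1
    show ?thesis by (rule path_indep[of "[x2, x3, x4, x5, x6, x1]"])
      (use 1 leaves distinct_leaves in \<open>auto simp: hexagon_def doubleton_eq_iff\<close>)
  next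
    case 2
    show ?thesis by (rule path_indep[of "[x3, x4, x5, x6, x1, x2]"])
      (use 2 leaves distinct_leaves in \<open>auto simp: hexagon_def doubleton_eq_iff\<close>)
  next
    case 3
    show ?thesis by (rule path_indep[of "[x4, x5, x6, x1, x2, x3]"])
      (use 3 leaves distinct_leaves in \<open>auto simp: hexagon_def doubleton_eq_iff\<close>)
  next
    case 4
    show ?thesis by (rule path_indep[of "[x5, x6, x1, x2, x3, x4]"])
      (use 4 leaves distinct_leaves in \<open>auto simp: hexagon_def doubleton_eq_iff\<close>)
  next
    case 5
    show ?thesis by (rule path_indep[of "[x6, x1, x2, x3, x4, x5]"])
      (use 5 leaves distinct_leaves in \<open>auto simp: hexagon_def doubleton_eq_iff\<close>)
  next
    case 6
    show ?thesis by (rule path_indep[of "[x1, x2, x3, x4, x5, x6]"])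
      (use 6 leaves distinct_leaves in \<open>auto simp: hexagon_def doubleton_eq_iff\<close>)
  qed
qed

lemma square_minus_edge_indep:
  assumes "c \<in> square" shows "rep_indep (lam V E) (square - {c})"
proof -
  note path_indep = rep_indep_lam_list_edges[OF three_le_card_X]
  from assms consider "c = {x1, x3}" | "c = {x3, x4}" | "c = {x4, x6}" | "c = {x6, x1}"
    unfolding square_def by blast
  then show ?thesis
  proof cases
    case 1
    show ?thesis by (rule path_indep[of "[x3, x4, x6, x1]"])
      (use 1 leaves distinct_leaves in \<open>auto simp: square_def doubleton_eq_iff\<close>)
  next
    case 2
    show ?thesis by (rule path_indep[of "[x4, x6, x1, x3]"])
      (use 2 leaves distinct_leaves in \<open>auto simp: square_def doubleton_eq_iff\<close>)
  next
    case 3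
    show ?thesis by (rule path_indep[of "[x6, x1, x3, x4]"])
      (use 3 leaves distinct_leaves in \<open>auto simp: square_def doubleton_eq_iff\<close>)
  next
    case 4
    show ?thesis by (rule path_indep[of "[x1, x3, x4, x6]"])
      (use 4 leaves distinct_leaves in \<open>auto simp: square_def doubleton_eq_iff\<close>)
  qed
qed

lemma hexagon_circuit: "M_circuit V E X hexagon"
  by (rule M_circuitI[OF finite_X configuration_cords(1) hexagon_dependent hexagon_minus_edge_indep])

lemma square_circuit: "M_circuit V E X square"
  by (rule M_circuitI[OF finite_X configuration_cords(2) square_dependent square_minus_edge_indep])

lemma symmetric_difference_hexagon_square:
  "(hexagon - square) \<union> (square - hexagon) = two_triangles"
proof -
  have "hexagon - square = {{x1, x2}, {x2, x3}, {x4, x5}, {x5, x6}}"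
    "square - hexagon = {{x1, x3}, {x4, x6}}"
    unfolding hexagon_def square_def using leaves_neq by (simp_all add: insert_Diff_if doubleton_eq_iff)
  then show ?thesis
    unfolding two_triangles_def insert_commute[of x3 x1 "{}"] insert_commute[of x6 x4 "{}"] by auto
qed

lemma two_triangles_indep: "M_indep V E X two_triangles"
  unfolding M_indep_def
  using configuration_cords(3) rep_indep_lam_if_indicator[OF three_le_card_X]
    rep_indep_two_triangles[where 'k = real, OF distinct_leaves] by (simp add: two_triangles_def)

lemma not_binary: "\<not> M_binary V E X"
proof
  assume "M_binary V E X"
  moreover have "{x1, x2} \<in> hexagon" "{x1, x2} \<notin> square"
    using leaves_neq by (auto simp: hexagon_def square_def doubleton_eq_iff)
  then have "hexagon \<noteq> square" by blast
  ultimately show False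
    using symmetric_difference_of_circuits_dependent_if_binary[OF finite_X _ hexagon_circuit
      square_circuit] symmetric_difference_hexagon_square two_triangles_indep by simp
qed

end


lemma (in x_tree) cherry_configuration:
  assumes "3 \<le> card X"
    and leaves: "x1 \<in> X" "x2 \<in> X" "x3 \<in> X" "x4 \<in> X" "x5 \<in> X" "x6 \<in> X"
    and "distinct [x1, x2, x3, x4, x5, x6]"
    and cherries: "is_cherry E x1 x4" "is_cherry E x2 x5" "is_cherry E x3 x6"
  shows "let L1 = {{x1,x2}, {x2,x3}, {x3,x4}, {x4,x5}, {x5,x6}, {x6,x1}};
             L2 = {{x1,x3}, {x3,x4}, {x4,x6}, {x6,x1}}
         in M_circuit V E X L1 \<and> M_circuit V E X L2 \<and>
            (L1 - L2) \<union> (L2 - L1) = {{x1,x2}, {x2,x3}, {x3,x1}, {x4,x5}, {x5,x6}, {x6,x4}} \<and>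
            M_indep V E X ((L1 - L2) \<union> (L2 - L1)) \<and> \<not> M_binary V E X"
proof -
  obtain p where "{x1, p} \<in> E" "{x4, p} \<in> E"
    using cherry_common_neighbour[OF cherries(1) leaves(1,4) assms(1)] .
  moreover obtain q where "{x2, q} \<in> E" "{x5, q} \<in> E"
    using cherry_common_neighbour[OF cherries(2) leaves(2,5) assms(1)] .
  moreover obtain r where "{x3, r} \<in> E" "{x6, r} \<in> E"
    using cherry_common_neighbour[OF cherries(3) leaves(3,6) assms(1)] .
  ultimately interpret three_cherries V E X x1 x2 x3 x4 x5 x6 p q r
    using assms by unfold_locales
  show ?thesis
    using hexagon_circuit square_circuit symmetric_difference_hexagon_square
      two_triangles_indep not_binary
    unfolding hexagon_def square_def two_triangles_def Let_def by simp
qed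


section \<open>Binary trees that are not caterpillars\<close>

lemma cherry_if_common_neighbour:
  assumes "z \<noteq> t" "{y, z} \<in> E" "{y, t} \<in> E" shows "is_cherry E z t"
  unfolding is_cherry_def
proof
  show "\<exists>ea\<in>E. \<exists>eb\<in>E. z \<in> ea \<and> t \<in> eb \<and> ea \<inter> eb \<noteq> {}"
    by (rule bexI[of _ "{y, z}"], rule bexI[of _ "{y, t}"]) (use assms in auto)
qed (rule assms(1))

lemma exists_crossing_index:
  assumes "xs \<noteq> []" "hd xs \<notin> A" "last xs \<in> A"
  shows "\<exists>i. Suc i < length xs \<and> xs ! i \<notin> A \<and> xs ! Suc i \<in> A"
  using assms
proof (induction xs)
  case (Cons a ys)
  show ?case
  proof (cases "hd ys \<in> A")
    case True
    then show ?thesis using Cons.prems by (cases ys) auto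
  next
    case False
    then have "ys \<noteq> []" using Cons.prems by auto
    then obtain i where "Suc i < length ys" "ys ! i \<notin> A" "ys ! Suc i \<in> A"
      using Cons.IH False Cons.prems by auto
    then show ?thesis by (intro exI[of _ "Suc i"]) simp
  qed
qed simp

context x_tree
begin

lemma path_adjacent_indices:
  assumes "is_path V E ps" "i < length ps" "j < length ps" "{ps ! i, ps ! j} \<in> E"
  shows "j = Suc i \<or> i = Suc j"
proof (cases i j rule: linorder_cases)
  case less
  then show ?thesis using path_chord assms by blast
next
  case equal
  then show ?thesis using assms(4) card_edge by fastforce
next
  case greater
  then show ?thesis using path_chord[OF assms(1) greater assms(2)] assms(4) by (simp add: insert_commute)
qed

lemma inner_path_vertex_not_leaf:
  assumes "is_path V E ps" "0 < i" "Suc i < length ps" shows "ps ! i \<notin> X"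
proof
  assume "ps ! i \<in> X"
  moreover have "ps ! i \<noteq> hd ps" "ps ! i \<noteq> last ps"
    using assms unfolding is_path_def by (auto simp: hd_conv_nth last_conv_nth nth_eq_iff_index_eq)
  ultimately show False using leaf_in_path[OF assms(1)] nth_mem[of i ps] assms(3) by fastforce
qed

lemma longest_path:
  assumes "P ps\<^sub>0" "\<And>ps. P ps \<Longrightarrow> is_path V E ps"
  obtains ps where "P ps" "\<And>qs. P qs \<Longrightarrow> length qs \<le> length ps"
proof -
  have "length ps < Suc (card V)" if "P ps" for ps
    using assms(2)[OF that] finite_V unfolding is_path_def by (metis card_mono distinct_card less_Suc_eq_le)
  then show thesis using that Lattices_Big.ex_has_greatest_nat[of P ps\<^sub>0 length] assms(1) by blast
qed

lemma interior_degree: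
  "is_binary_X_tree V E X \<Longrightarrow> v \<in> V \<Longrightarrow> v \<notin> X \<Longrightarrow> degree E v = 3"
  unfolding is_binary_X_tree_def by blast

lemma third_neighbour:
  assumes "v \<in> V" "degree E v = 3"
  obtains t where "{v, t} \<in> E" "t \<noteq> u" "t \<noteq> w"
proof -
  have "card {{v, u}, {v, w}} \<le> 2" by (simp add: card_insert_if)
  then have "card {{v, u}, {v, w}} < card {e\<in>E. v \<in> e}"
    using assms(2) unfolding degree_def by simp
  then have "\<not> {e\<in>E. v \<in> e} \<subseteq> {{v, u}, {v, w}}" by (meson card_mono finite.emptyI finite.insertI not_le)
  then obtain e where "e \<in> E" "v \<in> e" "e \<noteq> {v, u}" "e \<noteq> {v, w}" by blast
  then show thesis using that edge_from by metis
qed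

text \<open>An interior last vertex would have a further neighbour on the path, closing a cycle.\<close>
lemma path_end_leaf:
  assumes bin: "is_binary_X_tree V E X" and Q: "is_path V E Q" "2 \<le> length Q"
    and closed: "\<And>t. {last Q, t} \<in> E \<Longrightarrow> t \<in> set Q"
  shows "last Q \<in> X"
proof (rule ccontr)
  define n where "n = length Q"
  have "Q \<noteq> []" using Q(2) by auto
  then have last: "last Q = Q ! (n - 1)" by (simp add: n_def last_conv_nth)
  assume "last Q \<notin> X"
  then obtain t where t: "{last Q, t} \<in> E" "t \<noteq> Q ! (n - 2)" "t \<noteq> last Q"
    using third_neighbour interior_degree[OF bin] path_ends[OF Q(1)] edge_vertices by metis
  obtain m where m: "m < n" "Q ! m = t" using closed[OF t(1)] by (metis in_set_conv_nth n_def)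
  then have "n - 1 = Suc m \<or> m = Suc (n - 1)"
    using path_adjacent_indices[OF Q(1), of "n - 1" m] t(1) last Q(2) n_def by auto
  then have "m = n - 2" using m(1) by auto
  then show False using m(2) t(2) by simp
qed

lemma longest_path_with_prefix_ends_in_leaf:
  assumes bin: "is_binary_X_tree V E X" and Q: "is_path V E Q" "take 2 Q = [c, a]"
    and longest: "\<And>Q'. is_path V E Q' \<Longrightarrow> take 2 Q' = [c, a] \<Longrightarrow> length Q' \<le> length Q"
  shows "last Q \<in> X"
proof (rule path_end_leaf[OF bin Q(1)])
  show "2 \<le> length Q" using arg_cong[OF Q(2), of length] by simp
  show "t \<in> set Q" if "{last Q, t} \<in> E" for t
  proof (rule ccontr)
    assume "t \<notin> set Q"
    then have "is_path V E (Q @ [t])" using path_snoc[OF Q(1)] that edge_vertices by blast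
    moreover have "take 2 (Q @ [t]) = [c, a]" using \<open>2 \<le> length Q\<close> Q(2) by simp
    ultimately show False using longest by fastforce
  qed
qed

text \<open>The penultimate vertex of a longest path starting with the edge \<open>ca\<close> carries a cherry: its
  third neighbour is off the path, and replacing the last vertex by it gives another longest
  path.\<close>
lemma branch_cherry:
  assumes bin: "is_binary_X_tree V E X" and "{c, a} \<in> E" "a \<notin> X"
  obtains Q z t where "is_path V E Q" "take 2 Q = [c, a]"
    "z \<in> X" "t \<in> X" "z \<noteq> t" "{last Q, z} \<in> E" "{last Q, t} \<in> E"
proof -
  define P where "P Q \<longleftrightarrow> is_path V E Q \<and> take 2 Q = [c, a]" for Q
  have "P [c, a]" using path_doubleton assms(2) by (simp add: P_def)
  then obtain Q where "P Q" and longest: "\<And>Q'. P Q' \<Longrightarrow> length Q' \<le> length Q"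
    using longest_path[of P] P_def by blast
  note end_leaf = longest_path_with_prefix_ends_in_leaf[OF bin, of _ c a]
  define n where "n = length Q"
  have Q: "is_path V E Q" "take 2 Q = [c, a]" "last Q \<in> X"
    using \<open>P Q\<close> end_leaf longest by (auto simp: P_def)
  have "3 \<le> n"
  proof (rule ccontr)
    assume "\<not> 3 \<le> n"
    then have "Q = [c, a]" using Q(2) arg_cong[OF Q(2), of length] n_def by simp
    then show False using Q(3) assms(3) by simp
  qed
  define y where "y = Q ! (n - 2)"
  have last_Q: "last Q = Q ! (n - 1)" using \<open>3 \<le> n\<close> n_def by (cases Q) (auto simp: last_conv_nth)
  have "Suc (n - 2) = n - 1" "n - 1 < n" using \<open>3 \<le> n\<close> by auto
  then have y_edge: "{y, last Q} \<in> E"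
    using path_edge[OF Q(1), of "n - 2"] last_Q by (simp add: y_def n_def)
  have "y \<notin> X" using inner_path_vertex_not_leaf[OF Q(1), of "n - 2"] \<open>3 \<le> n\<close> by (simp add: y_def n_def)
  moreover have "y \<in> V" using edge_vertices y_edge by blast
  ultimately obtain t where t: "{y, t} \<in> E" "t \<noteq> Q ! (n - 3)" "t \<noteq> last Q"
    using third_neighbour interior_degree[OF bin] by metis
  have "t \<notin> set Q"
  proof
    assume "t \<in> set Q"
    then obtain m where "m < n" "Q ! m = t" by (metis in_set_conv_nth n_def)
    then have "m = Suc (n - 2) \<or> n - 2 = Suc m"
      using path_adjacent_indices[OF Q(1), of "n - 2" m] t(1) n_def by (simp add: y_def)
    then have "m = n - 1 \<or> m = n - 3" using \<open>3 \<le> n\<close> by auto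
    then show False using t \<open>Q ! m = t\<close> last_Q by auto
  qed
  have "P (butlast Q)"
    using Q(1,2) path_take[OF Q(1), of "n - 1"] \<open>3 \<le> n\<close> n_def
    by (simp add: P_def butlast_conv_take min_def)
  moreover have "last (butlast Q) = y"
  proof -
    have "2 \<le> length (butlast Q)" using \<open>3 \<le> n\<close> by (simp add: n_def)
    then have "butlast Q \<noteq> []" by (cases "butlast Q") auto
    then show ?thesis
      using \<open>3 \<le> n\<close> by (simp add: y_def last_conv_nth nth_butlast n_def numeral_2_eq_2)
  qed
  moreover have "t \<notin> set (butlast Q)" using \<open>t \<notin> set Q\<close> in_set_butlastD by metis
  ultimately have "is_path V E (butlast Q @ [t])" "take 2 (butlast Q @ [t]) = [c, a]"
    using path_snoc[of "butlast Q" t] t(1) edge_vertices \<open>3 \<le> n\<close> n_def by (auto simp: P_def)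
  then have "t \<in> X" using end_leaf longest \<open>3 \<le> n\<close> n_def by (fastforce simp: P_def)
  show thesis
    using that[of "butlast Q" "last Q" t] \<open>P (butlast Q)\<close> \<open>last (butlast Q) = y\<close> Q(3) \<open>t \<in> X\<close>
      t(1,3) y_edge by (simp add: P_def)
qed

lemma interior_vertex_attached_to_path:
  assumes "is_path V E S" "S \<noteq> []" "u \<in> V - X" "u \<notin> set S"
  obtains w s where "w \<in> V - X" "w \<notin> set S" "s \<in> set S" "{w, s} \<in> E"
proof -
  obtain R where R: "is_path V E R" "hd R = u" "last R = hd S"
    using path_exists assms(3) path_ends[OF assms(1)] by blast
  then have "R \<noteq> []" by (simp add: is_path_def)
  then obtain i where i: "Suc i < length R" "R ! i \<notin> set S" "R ! Suc i \<in> set S"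
    using exists_crossing_index[of R "set S"] R assms(2,4) by auto
  have "R ! i \<notin> X"
  proof
    assume "R ! i \<in> X"
    then have "R ! i = hd R \<or> R ! i = last R" using leaf_in_path[OF R(1)] i(1) by simp
    then show False using R(2,3) assms(2,3) i(2) \<open>R ! i \<in> X\<close> by auto
  qed
  moreover have "{R ! i, R ! Suc i} \<in> E" using path_edge[OF R(1) i(1)] .
  ultimately show thesis using that i(2,3) edge_vertices by blast
qed

text \<open>Take a longest path of interior vertices; since the tree is not a caterpillar, some other
  interior vertex attaches to it, and by maximality only at an inner vertex of the path.\<close>
lemma interior_vertex_with_interior_neighbours:
  assumes bin: "is_binary_X_tree V E X" and "\<not> is_caterpillar V E X"
  obtains c a1 a2 a3 where "{c, a1} \<in> E" "{c, a2} \<in> E" "{c, a3} \<in> E"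
    "a1 \<notin> X" "a2 \<notin> X" "a3 \<notin> X" "distinct [a1, a2, a3]"
proof -
  have off_path: "\<exists>u\<in>V - X. u \<notin> set ps" if "is_path V E ps" for ps
    using assms that unfolding is_caterpillar_def by blast
  obtain v where "v \<in> V" using tree unfolding is_tree_def by blast
  then obtain u\<^sub>0 where "u\<^sub>0 \<in> V - X" using off_path[OF path_singleton] by blast
  define P where "P ps \<longleftrightarrow> is_path V E ps \<and> set ps \<subseteq> V - X" for ps
  have "P [u\<^sub>0]" using \<open>u\<^sub>0 \<in> V - X\<close> path_singleton by (simp add: P_def)
  then obtain S where "P S" and longest: "\<And>ps. P ps \<Longrightarrow> length ps \<le> length S"
    using longest_path[of P] P_def by blast
  then have S: "is_path V E S" "set S \<subseteq> V - X" "S \<noteq> []" "distinct S"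
    by (auto simp: P_def is_path_def)
  obtain w s where w: "w \<in> V - X" "w \<notin> set S" "s \<in> set S" "{w, s} \<in> E"
    using off_path[OF S(1)] interior_vertex_attached_to_path[OF S(1,3)] by metis
  obtain k where k: "k < length S" "S ! k = s" using w(3) by (metis in_set_conv_nth)
  have "k \<noteq> 0"
  proof
    assume "k = 0"
    then have "P (w # S)" using path_Cons[OF S(1)] w k S(2,3) by (simp add: P_def hd_conv_nth)
    then show False using longest by fastforce
  qed
  moreover have "k \<noteq> length S - 1"
  proof
    assume "k = length S - 1"
    then have "P (S @ [w])"
      using path_snoc[OF S(1)] w k S(2,3) by (simp add: P_def last_conv_nth insert_commute)
    then show False using longest by fastforce
  qed
  ultimately have "0 < k" "Suc k < length S" using k(1) by auto
  then have "{S ! (k - 1), s} \<in> E" "{s, S ! Suc k} \<in> E" "S ! (k - 1) \<noteq> S ! Suc k"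
    using path_edge[OF S(1), of "k - 1"] path_edge[OF S(1), of k] k(2) S(4)
    by (simp_all add: nth_eq_iff_index_eq)
  moreover have "S ! (k - 1) \<in> set S" "S ! Suc k \<in> set S" using \<open>Suc k < length S\<close> by auto
  moreover have "{s, w} \<in> E" "{s, S ! (k - 1)} \<in> E" using w(4) calculation(1) by (metis insert_commute)+
  ultimately show thesis using that[of s "S ! (k - 1)" "S ! Suc k" w] S(2) w(1,2) by auto
qed

lemma prefixed_paths_different_ends:
  assumes "is_path V E Q" "is_path V E Q'" "take 2 Q = [c, a]" "take 2 Q' = [c, a']" "a \<noteq> a'"
  shows "last Q \<noteq> last Q'"
proof
  assume "last Q = last Q'"
  moreover have "hd Q = hd Q'"
    using arg_cong[OF assms(3), of hd] arg_cong[OF assms(4), of hd] hd_take[of 2 Q] hd_take[of 2 Q']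
    by simp
  ultimately have "Q = Q'" using path_unique assms(1,2) by blast
  then show False using assms(3-5) by simp
qed

lemma non_caterpillar_has_three_cherries:
  assumes bin: "is_binary_X_tree V E X" and "\<not> is_caterpillar V E X"
  obtains x1 x2 x3 x4 x5 x6 where "x1 \<in> X" "x2 \<in> X" "x3 \<in> X" "x4 \<in> X" "x5 \<in> X" "x6 \<in> X"
    "distinct [x1, x2, x3, x4, x5, x6]"
    "is_cherry E x1 x4" "is_cherry E x2 x5" "is_cherry E x3 x6"
proof -
  obtain c a1 a2 a3 where c: "{c, a1} \<in> E" "{c, a2} \<in> E" "{c, a3} \<in> E"
    "a1 \<notin> X" "a2 \<notin> X" "a3 \<notin> X" "distinct [a1, a2, a3]"
    using interior_vertex_with_interior_neighbours[OF assms] by blast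
  obtain Q1 z1 t1 where B1: "is_path V E Q1" "take 2 Q1 = [c, a1]"
    "z1 \<in> X" "t1 \<in> X" "z1 \<noteq> t1" "{last Q1, z1} \<in> E" "{last Q1, t1} \<in> E"
    using branch_cherry[OF bin c(1,4)] by blast
  obtain Q2 z2 t2 where B2: "is_path V E Q2" "take 2 Q2 = [c, a2]"
    "z2 \<in> X" "t2 \<in> X" "z2 \<noteq> t2" "{last Q2, z2} \<in> E" "{last Q2, t2} \<in> E"
    using branch_cherry[OF bin c(2,5)] by blast
  obtain Q3 z3 t3 where B3: "is_path V E Q3" "take 2 Q3 = [c, a3]"
    "z3 \<in> X" "t3 \<in> X" "z3 \<noteq> t3" "{last Q3, z3} \<in> E" "{last Q3, t3} \<in> E"
    using branch_cherry[OF bin c(3,6)] by blast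
  have ends: "last Q1 \<noteq> last Q2" "last Q1 \<noteq> last Q3" "last Q2 \<noteq> last Q3"
    using prefixed_paths_different_ends B1(1,2) B2(1,2) B3(1,2) c(7) by simp_all
  have disjoint_cherries: "z \<noteq> z' \<and> z \<noteq> t' \<and> t \<noteq> z' \<and> t \<noteq> t'"
    if "y \<noteq> y'" "z \<in> X" "t \<in> X" "{y, z} \<in> E" "{y, t} \<in> E" "{y', z'} \<in> E" "{y', t'} \<in> E"
    for y y' z t z' t'
  proof -
    have "y = y'" if "a \<in> X" "{y, a} \<in> E" "{y', a} \<in> E" for a
      using leaf_neighbour_unique[OF that(1), of y y'] that(2,3) by (simp add: insert_commute)
    then show ?thesis using that by auto
  qed
  have "distinct [z1, z2, z3, t1, t2, t3]"
    using disjoint_cherries[OF ends(1) B1(3,4,6,7) B2(6,7)]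
      disjoint_cherries[OF ends(2) B1(3,4,6,7) B3(6,7)]
      disjoint_cherries[OF ends(3) B2(3,4,6,7) B3(6,7)] B1(5) B2(5) B3(5)
    by auto
  then show thesis
    using that cherry_if_common_neighbour[OF B1(5-7)] cherry_if_common_neighbour[OF B2(5-7)]
      cherry_if_common_neighbour[OF B3(5-7)] B1(3,4) B2(3,4) B3(3,4) by blast
qed

end


theorem mainTheorem12:
  fixes V :: "'v set" and E :: "'v set set" and X :: "'v set"
  assumes T: "is_X_tree V E X" and n3: "card X \<ge> 3"
  shows
    "(\<forall>x1 x2 x3 x4 x5 x6.
       x1 \<in> X \<and> x2 \<in> X \<and> x3 \<in> X \<and> x4 \<in> X \<and> x5 \<in> X \<and> x6 \<in> X \<and>
       distinct [x1, x2, x3, x4, x5, x6] \<and>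
       is_cherry E x1 x4 \<and> is_cherry E x2 x5 \<and> is_cherry E x3 x6 \<longrightarrow>
       (let L1 = {{x1,x2}, {x2,x3}, {x3,x4}, {x4,x5}, {x5,x6}, {x6,x1}};
            L2 = {{x1,x3}, {x3,x4}, {x4,x6}, {x6,x1}}
        in M_circuit V E X L1 \<and> M_circuit V E X L2 \<and>
           (L1 - L2) \<union> (L2 - L1) = {{x1,x2}, {x2,x3}, {x3,x1}, {x4,x5}, {x5,x6}, {x6,x4}} \<and>
           M_indep V E X ((L1 - L2) \<union> (L2 - L1)) \<and>
           \<not> M_binary V E X)) \<and>
    (is_binary_X_tree V E X \<and> M_binary V E X \<longrightarrow> is_caterpillar V E X)"
proof -
  interpret x_tree V E X by (rule x_tree.intro[OF T])
  have "is_caterpillar V E X" if bin: "is_binary_X_tree V E X" and "M_binary V E X"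
  proof (rule ccontr)
    assume "\<not> is_caterpillar V E X"
    then obtain x1 x2 x3 x4 x5 x6 where "x1 \<in> X" "x2 \<in> X" "x3 \<in> X" "x4 \<in> X" "x5 \<in> X" "x6 \<in> X"
      "distinct [x1, x2, x3, x4, x5, x6]"
      "is_cherry E x1 x4" "is_cherry E x2 x5" "is_cherry E x3 x6"
      using non_caterpillar_has_three_cherries[OF bin] by blast
    then show False using cherry_configuration[OF n3] \<open>M_binary V E X\<close> unfolding Let_def by blast
  qed
  then show ?thesis using cherry_configuration[OF n3] by blast
qed

end
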